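(* Let $G$ be a proper, Polishable, strongly dense subgroup of $\mathbb{T}^\mathbb{N}$. Then the action of $G$ on $\mathbb{T}^\mathbb{N}$ by (coordinatewise multiplicative) translation, with $G$ carrying its Polish group topology, is turbulent.
   Context: $\mathbb{T}=\{z\in\mathbb{C}:|z|=1\}$, and $\mathbb{T}^\mathbb{N}$ carries the product topology and coordinatewise multiplication. A subgroup $G\le\mathbb{T}^\mathbb{N}$ is Polishable if it is a Borel subset and admits a Polish group topology whose Borel sets are exactly the Borel subsets of $\mathbb{T}^\mathbb{N}$ contained in $G$. $G$ is strongly dense if for every finite sequence $(z_0,\dots,z_n)$ of elements of $\mathbb{T}$ there is $g\in G$ with $g_i=z_i$ for all $i\le n$. For a continuous action of a Polish group $G$ on a Polish space $X$, $U\subseteq X$ open, $V\subseteq G$ a symmetric open neighborhood of the identity, and $x\in U$, the local orbit $\mathcal{O}(x,U,V)$ is the set of $y\in U$ for which there are $g_0,\dots,g_k\in V$ and $x=x_0,\dots,x_{k+1}=y$ all in $U$ with $x_{i+1}=g_i\cdot x_i$ for $i\le k$. The action is turbulent if every orbit is dense, every orbit is meager, and every local orbit $\mathcal{O}(x,U,V)$ has closure with nonempty interior. *)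

theory Defs
  imports "HOL-Analysis.Analysis"
begin

definition polish_space :: "'a topology \<Rightarrow> bool" where
  "polish_space X \<longleftrightarrow> completely_metrizable_space X \<and> separable_space X"

definition borel_sets_of :: "'a topology \<Rightarrow> 'a set set" where
  "borel_sets_of X = sigma_sets (topspace X) {U. openin X U}"

definition nowhere_dense_in :: "'a topology \<Rightarrow> 'a set \<Rightarrow> bool" where
  "nowhere_dense_in X S \<longleftrightarrow> S \<subseteq> topspace X \<and> X interior_of (X closure_of S) = {}"

definition meager_in :: "'a topology \<Rightarrow> 'a set \<Rightarrow> bool" where
  "meager_in X S \<longleftrightarrow> S \<subseteq> topspace X \<and>
     (\<exists>F :: nat \<Rightarrow> 'a set. (\<forall>n. nowhere_dense_in X (F n)) \<and> S \<subseteq> (\<Union>n. F n))"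

text \<open>Action of a topological group (topology \<open>Gt\<close> with underlying set \<open>topspace Gt\<close>,
  identity \<open>e\<close>, inverse \<open>inv\<close>) on a space \<open>X\<close> via \<open>act\<close>.\<close>

definition orbit :: "'g topology \<Rightarrow> ('g \<Rightarrow> 'x \<Rightarrow> 'x) \<Rightarrow> 'x \<Rightarrow> 'x set" where
  "orbit Gt act x = {act g x | g. g \<in> topspace Gt}"

definition local_orbit ::
  "('g \<Rightarrow> 'x \<Rightarrow> 'x) \<Rightarrow> 'x \<Rightarrow> 'x set \<Rightarrow> 'g set \<Rightarrow> 'x set" where
  "local_orbit act x U V = {y \<in> U. \<exists>(k::nat) (g :: nat \<Rightarrow> 'g) (xs :: nat \<Rightarrow> 'x).
      (\<forall>i\<le>k. g i \<in> V) \<and> (\<forall>i\<le>Suc k. xs i \<in> U) \<and> xs 0 = x \<and> xs (Suc k) = y \<and>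
      (\<forall>i\<le>k. xs (Suc i) = act (g i) (xs i))}"

definition turbulent ::
  "'g topology \<Rightarrow> 'g \<Rightarrow> ('g \<Rightarrow> 'g) \<Rightarrow> 'x topology \<Rightarrow> ('g \<Rightarrow> 'x \<Rightarrow> 'x) \<Rightarrow> bool" where
  "turbulent Gt e ginv X act \<longleftrightarrow>
     (\<forall>x\<in>topspace X. X closure_of (orbit Gt act x) = topspace X) \<and>
     (\<forall>x\<in>topspace X. meager_in X (orbit Gt act x)) \<and>
     (\<forall>U V x. openin X U \<and> openin Gt V \<and> e \<in> V \<and> (\<forall>g\<in>V. ginv g \<in> V) \<and> x \<in> U \<longrightarrow>
        X interior_of (X closure_of (local_orbit act x U V)) \<noteq> {})"

definition Tor :: "complex set" where
  "Tor = {z. cmod z = 1}"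

text \<open>\<open>\<T>^\<nat>\<close> as a subset of \<open>nat \<Rightarrow> complex\<close>, which carries the product topology.\<close>
definition TN :: "(nat \<Rightarrow> complex) set" where
  "TN = {x. \<forall>n. x n \<in> Tor}"

definition TN_top :: "(nat \<Rightarrow> complex) topology" where
  "TN_top = top_of_set TN"

definition tmult :: "(nat \<Rightarrow> complex) \<Rightarrow> (nat \<Rightarrow> complex) \<Rightarrow> (nat \<Rightarrow> complex)" where
  "tmult g x = (\<lambda>n. g n * x n)"

definition tinv :: "(nat \<Rightarrow> complex) \<Rightarrow> (nat \<Rightarrow> complex)" where
  "tinv g = (\<lambda>n. inverse (g n))"

definition tone :: "nat \<Rightarrow> complex" where
  "tone = (\<lambda>n. 1)"

definition subgroup_TN :: "(nat \<Rightarrow> complex) set \<Rightarrow> bool" where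
  "subgroup_TN G \<longleftrightarrow> G \<subseteq> TN \<and> tone \<in> G \<and>
     (\<forall>g\<in>G. \<forall>h\<in>G. tmult g h \<in> G) \<and> (\<forall>g\<in>G. tinv g \<in> G)"

definition polish_group_topology_for :: "(nat \<Rightarrow> complex) set \<Rightarrow> (nat \<Rightarrow> complex) topology \<Rightarrow> bool" where
  "polish_group_topology_for G \<tau> \<longleftrightarrow>
     topspace \<tau> = G \<and> polish_space \<tau> \<and>
     continuous_map (prod_topology \<tau> \<tau>) \<tau> (\<lambda>(g, h). tmult g h) \<and>
     continuous_map \<tau> \<tau> tinv \<and>
     borel_sets_of \<tau> = {B \<in> sets (borel :: (nat \<Rightarrow> complex) measure). B \<subseteq> G}"

definition polishable :: "(nat \<Rightarrow> complex) set \<Rightarrow> bool" where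
  "polishable G \<longleftrightarrow> subgroup_TN G \<and> G \<in> sets (borel :: (nat \<Rightarrow> complex) measure) \<and>
     (\<exists>\<tau>. polish_group_topology_for G \<tau>)"

definition strongly_dense :: "(nat \<Rightarrow> complex) set \<Rightarrow> bool" where
  "strongly_dense G \<longleftrightarrow>
     (\<forall>(n::nat) (z :: nat \<Rightarrow> complex). (\<forall>i\<le>n. z i \<in> Tor) \<longrightarrow> (\<exists>g\<in>G. \<forall>i\<le>n. g i = z i))"

end

theory Submission
  imports Defs "HOL-Complex_Analysis.Weierstrass_Factorization"
begin

text \<open>Orbits are dense since \<open>G\<close> is strongly dense, and meager since a non-meager subgroup
  with the Baire property contains a neighbourhood of the identity (Pettis), hence is open and,
  being dense, equal to \<open>TN\<close>.

  For local orbits, Pettis' lemma in the Polish topology \<open>\<tau>\<close> shows that \<open>\<tau>\<close>-small elements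
  are small on finitely many coordinates. Countably many translates of a \<open>\<tau>\<close>-neighbourhood \<open>A\<close>
  of the identity cover \<open>G\<close>, so by strong density and Baire category in \<open>TN\<close> quotients
  \<open>b = a\<^sub>1\<inverse> a\<^sub>2\<close> (\<open>a\<^sub>i \<in> A\<close>) approximate any point near the identity on finitely many
  coordinates. Taking \<open>b\<close> close to an \<open>M\<close>-th root of \<open>y x\<inverse>\<close>, for \<open>y\<close> near \<open>x\<close>, the walk
  \<open>x, a\<^sub>1\<inverse> x, b x, a\<^sub>1\<inverse> b x, \<dots>, b\<^sup>M x\<close> takes steps in \<open>A \<union> A\<inverse>\<close>, stays near \<open>x\<close> and
  ends near \<open>y\<close>. So the closure of a local orbit of \<open>x\<close> contains a neighbourhood of \<open>x\<close>.\<close>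

section \<open>Meager sets and the Baire property\<close>

lemma meager_in_subset: "meager_in X T \<Longrightarrow> S \<subseteq> T \<Longrightarrow> meager_in X S"
  unfolding meager_in_def by blast

lemma meager_in_empty: "meager_in X {}"
  unfolding meager_in_def nowhere_dense_in_def by auto

lemma nowhere_dense_imp_meager_in: "nowhere_dense_in X S \<Longrightarrow> meager_in X S"
  unfolding meager_in_def nowhere_dense_in_def by (intro conjI exI[of _ "\<lambda>n. S"]) auto

lemma meager_in_UN_nat:
  assumes "\<And>n::nat. meager_in X (A n)"
  shows "meager_in X (\<Union>n. A n)"
proof -
  have "\<forall>n. \<exists>F::nat \<Rightarrow> _. (\<forall>k. nowhere_dense_in X (F k)) \<and> A n \<subseteq> (\<Union>k. F k)"
    using assms unfolding meager_in_def by blast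
  then obtain F :: "nat \<Rightarrow> nat \<Rightarrow> _"
    where F: "\<And>n k. nowhere_dense_in X (F n k)" "\<And>n. A n \<subseteq> (\<Union>k. F n k)"
    by (metis choice_iff)
  define F' where "F' j = case_prod F (prod_decode j)" for j
  have "(\<Union>n. A n) \<subseteq> (\<Union>j. F' j)"
  proof
    fix x assume "x \<in> (\<Union>n. A n)"
    then obtain n k where "x \<in> F n k" using F(2) by blast
    then show "x \<in> (\<Union>j. F' j)"
      unfolding F'_def by (intro UN_I[of "prod_encode (n, k)"]) auto
  qed
  moreover have "(\<Union>n. A n) \<subseteq> topspace X"
    using assms unfolding meager_in_def by blast
  moreover have "\<forall>j. nowhere_dense_in X (F' j)"
    by (simp add: F'_def F(1) split: prod.split)
  ultimately show ?thesis unfolding meager_in_def by blast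
qed

lemma meager_in_countable_UN:
  assumes "countable K" "\<And>k. k \<in> K \<Longrightarrow> meager_in X (A k)"
  shows "meager_in X (\<Union>k\<in>K. A k)"
proof (cases "K = {}")
  case True
  then show ?thesis by (simp add: meager_in_empty)
next
  case False
  have "(\<Union>k\<in>K. A k) = (\<Union>n. A (from_nat_into K n))"
    using range_from_nat_into[OF False assms(1)] by (metis image_image)
  moreover have "meager_in X (\<Union>n. A (from_nat_into K n))"
    by (rule meager_in_UN_nat) (simp add: False assms from_nat_into)
  ultimately show ?thesis by simp
qed

lemma meager_in_Un:
  assumes "meager_in X S" "meager_in X T"
  shows "meager_in X (S \<union> T)"
proof -
  have "meager_in X (\<Union>k\<in>{S, T}. k)"
    by (rule meager_in_countable_UN) (use assms in auto)
  then show ?thesis by simp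
qed

lemma not_meager_in_openin:
  assumes X: "completely_metrizable_space X \<or> locally_compact_space X \<and> regular_space X"
    and "openin X S" "S \<noteq> {}"
  shows "\<not> meager_in X S"
proof
  assume "meager_in X S"
  then obtain F :: "nat \<Rightarrow> _" where F: "\<And>n. nowhere_dense_in X (F n)" "S \<subseteq> (\<Union>n. F n)"
    unfolding meager_in_def by blast
  have "X interior_of \<Union>(range (\<lambda>n. X closure_of F n)) = {}"
    using F(1) by (intro Baire_category_alt X) (auto simp: nowhere_dense_in_def)
  moreover have "S \<subseteq> \<Union>(range (\<lambda>n. X closure_of F n))"
  proof
    fix x assume "x \<in> S"
    then obtain n where "x \<in> F n" using F(2) by blast
    then show "x \<in> \<Union>(range (\<lambda>n. X closure_of F n))"
      using F(1)[of n] closure_of_subset[of "F n" X] unfolding nowhere_dense_in_def by blast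
  qed
  ultimately have "S \<subseteq> {}"
    by (metis assms(2) interior_of_maximal)
  then show False using assms by blast
qed

lemma countable_cover_somewhere_dense:
  assumes X: "completely_metrizable_space X \<or> locally_compact_space X \<and> regular_space X"
    and "countable D" "\<And>d. d \<in> D \<Longrightarrow> P d \<subseteq> topspace X"
    and "topspace X \<subseteq> (\<Union>d\<in>D. P d)" "topspace X \<noteq> {}"
  obtains d where "d \<in> D" "X interior_of (X closure_of P d) \<noteq> {}"
proof -
  have "\<exists>d\<in>D. \<not> nowhere_dense_in X (P d)"
  proof (rule ccontr)
    assume "\<not> ?thesis"
    then have "meager_in X (\<Union>d\<in>D. P d)"
      by (intro meager_in_countable_UN[OF assms(2)]) (blast intro: nowhere_dense_imp_meager_in)
    then show False
      using assms(4,5) meager_in_subset not_meager_in_openin[OF X] by (metis openin_topspace)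
  qed
  then show ?thesis
    using that assms(3) unfolding nowhere_dense_in_def by blast
qed

lemma nowhere_dense_in_homeomorphic_image:
  assumes f: "homeomorphic_map X X f" and S: "nowhere_dense_in X S"
  shows "nowhere_dense_in X (f ` S)"
proof -
  have St: "S \<subseteq> topspace X" using S unfolding nowhere_dense_in_def by blast
  have "X interior_of (X closure_of (f ` S)) = f ` (X interior_of (X closure_of S))"
    using homeomorphic_map_closure_of[OF f St]
      homeomorphic_map_interior_of[OF f closure_of_subset_topspace] by simp
  moreover have "f ` S \<subseteq> topspace X"
    using St homeomorphic_imp_surjective_map[OF f] by blast
  ultimately show ?thesis using S unfolding nowhere_dense_in_def by auto
qed

lemma meager_in_homeomorphic_image:
  assumes f: "homeomorphic_map X X f" and S: "meager_in X S"
  shows "meager_in X (f ` S)"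
proof -
  obtain F :: "nat \<Rightarrow> _"
    where F: "\<And>n. nowhere_dense_in X (F n)" "S \<subseteq> (\<Union>n. F n)" "S \<subseteq> topspace X"
    using S unfolding meager_in_def by blast
  show ?thesis unfolding meager_in_def
  proof (intro conjI exI[of _ "\<lambda>n. f ` F n"] allI)
    show "f ` S \<subseteq> topspace X"
      using F(3) homeomorphic_imp_surjective_map[OF f] by blast
    show "nowhere_dense_in X (f ` F n)" for n
      using F(1) nowhere_dense_in_homeomorphic_image[OF f] by blast
    show "f ` S \<subseteq> (\<Union>n. f ` F n)" using F(2) by blast
  qed
qed

lemma nowhere_dense_in_closure_of_diff:
  assumes "openin X Q"
  shows "nowhere_dense_in X (X closure_of Q - Q)"
proof -
  let ?T = "X closure_of Q - Q"
  have "X interior_of ?T \<inter> X closure_of Q = {}"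
    using openin_Int_closure_of_eq_empty[of X "X interior_of ?T" Q] interior_of_subset[of X ?T]
    by auto
  then have "X interior_of ?T = {}"
    using interior_of_subset[of X ?T] by blast
  moreover have "closedin X ?T"
    using assms by (simp add: closedin_diff)
  ultimately show ?thesis
    using closure_of_closedin closedin_subset unfolding nowhere_dense_in_def by metis
qed

definition baire_property :: "'a topology \<Rightarrow> 'a set \<Rightarrow> bool" where
  "baire_property X A \<longleftrightarrow>
     A \<subseteq> topspace X \<and> (\<exists>Q. openin X Q \<and> meager_in X (sym_diff A Q))"

lemma baire_property_sigma_sets:
  assumes "A \<in> sigma_sets (topspace X) {U. openin X U}"
  shows "baire_property X A"
  using assms
proof (induction rule: sigma_sets.induct)
  case (Basic a)
  then show ?case unfolding baire_property_def
    by (intro conjI exI[of _ a]) (auto simp: meager_in_empty openin_subset)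
next
  case Empty
  then show ?case unfolding baire_property_def
    by (intro conjI exI[of _ "{}"]) (auto simp: meager_in_empty)
next
  case (Compl a)
  then obtain Q where Q: "openin X Q" "meager_in X (sym_diff a Q)"
    unfolding baire_property_def by blast
  let ?Q = "topspace X - X closure_of Q"
  have "meager_in X (sym_diff a Q \<union> (X closure_of Q - Q))"
    using Q nowhere_dense_in_closure_of_diff nowhere_dense_imp_meager_in meager_in_Un by blast
  moreover have "sym_diff (topspace X - a) ?Q \<subseteq> sym_diff a Q \<union> (X closure_of Q - Q)"
    using closure_of_subset[of Q X] Q(1) openin_subset by blast
  ultimately show ?case unfolding baire_property_def
    by (intro conjI exI[of _ ?Q]) (auto intro: meager_in_subset)
next
  case (Union a)
  then have "\<forall>i. \<exists>Q. openin X Q \<and> meager_in X (sym_diff (a i) Q)"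
    unfolding baire_property_def by blast
  then obtain Q where Q: "\<And>i. openin X (Q i)" "\<And>i. meager_in X (sym_diff (a i) (Q i))"
    by (metis choice_iff)
  have "meager_in X (\<Union>i. sym_diff (a i) (Q i))"
    by (rule meager_in_UN_nat) (rule Q(2))
  moreover have "sym_diff (\<Union>i. a i) (\<Union>i. Q i) \<subseteq> (\<Union>i. sym_diff (a i) (Q i))"
    by blast
  ultimately show ?case using Union.IH Q(1) unfolding baire_property_def
    by (intro conjI exI[of _ "\<Union>i. Q i"]) (auto intro: meager_in_subset)
qed

section \<open>Estimates on the unit circle\<close>

lemma norm_mult_inverse_minus_one: "cmod k = 1 \<Longrightarrow> cmod (g * inverse k - 1) = cmod (g - k)"
proof -
  assume k: "cmod k = 1"
  then have "k \<noteq> 0" by auto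
  then have "g * inverse k - 1 = (g - k) * inverse k"
    by (simp add: field_simps)
  then show ?thesis using k by (simp add: norm_mult norm_inverse)
qed

lemma norm_mult_inverse_minus_one_le:
  fixes a c :: complex
  assumes "cmod a = 1"
  shows "cmod (c * inverse a - 1) \<le> cmod (c - 1) + cmod (a - 1)"
proof -
  have "a \<noteq> 0" using assms by auto
  then have "c * inverse a - 1 = (c - 1) * inverse a + (1 - a) * inverse a"
    by (simp add: field_simps)
  then have "cmod (c * inverse a - 1) \<le> cmod ((c - 1) * inverse a) + cmod ((1 - a) * inverse a)"
    by (metis norm_triangle_ineq)
  then show ?thesis
    using assms by (simp add: norm_mult norm_inverse norm_minus_commute)
qed

lemma norm_inverse_mult_diff_less:
  fixes d a1 a2 p c :: complex
  assumes "cmod d = 1" "cmod a1 = 1" "cmod c = 1"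
    and "cmod (d * a1 - p) < e" "cmod (d * a2 - p * c) < e"
  shows "cmod (inverse a1 * a2 - c) < 2 * e"
proof -
  have "d \<noteq> 0" "a1 \<noteq> 0" using assms by auto
  then have "inverse a1 * a2 - c = inverse (d * a1) * ((d * a2 - p * c) + (p - d * a1) * c)"
    by (simp add: field_simps)
  then have "cmod (inverse a1 * a2 - c) = cmod ((d * a2 - p * c) + (p - d * a1) * c)"
    using assms by (simp add: norm_mult norm_inverse)
  also have "\<dots> \<le> cmod (d * a2 - p * c) + cmod ((p - d * a1) * c)"
    by (rule norm_triangle_ineq)
  also have "\<dots> < 2 * e"
    using assms by (simp add: norm_mult norm_minus_commute)
  finally show ?thesis .
qed

lemma norm_power_diff_le:
  fixes a c :: complex
  assumes "cmod a = 1" "cmod c = 1"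
  shows "cmod (a ^ j - c ^ j) \<le> real j * cmod (a - c)"
proof (induction j)
  case 0
  then show ?case by simp
next
  case (Suc j)
  have "a ^ Suc j - c ^ Suc j = a * (a ^ j - c ^ j) + c ^ j * (a - c)"
    by (simp add: algebra_simps)
  then have "cmod (a ^ Suc j - c ^ Suc j) \<le> cmod (a * (a ^ j - c ^ j)) + cmod (c ^ j * (a - c))"
    by (metis norm_triangle_ineq)
  also have "\<dots> = cmod (a ^ j - c ^ j) + cmod (a - c)"
    using assms by (simp add: norm_mult norm_power)
  also have "\<dots> \<le> real j * cmod (a - c) + cmod (a - c)"
    using Suc by simp
  finally show ?case by (simp add: algebra_simps)
qed

lemma norm_exp_power_minus_one_le:
  assumes "cmod (of_nat j * u) \<le> 1/2"
  shows "cmod (exp u ^ j - 1) \<le> 3/2 * cmod (of_nat j * u)"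
  using norm_exp_bounds(2)[OF assms] by (simp add: exp_of_nat_mult)

lemma Re_Ln_unit:
  assumes "cmod z = 1"
  shows "Re (Ln z) = 0"
proof -
  have "z \<noteq> 0" using assms by auto
  then show ?thesis using assms by simp
qed

lemma norm_exp_Ln_div:
  assumes "cmod z = 1"
  shows "cmod (exp (Ln z / of_nat M)) = 1"
  using Re_Ln_unit[OF assms] by (simp add: norm_exp_eq_Re)

lemma norm_Ln_unit_le_pi:
  assumes "cmod z = 1"
  shows "cmod (Ln z) \<le> pi"
proof -
  have "z \<noteq> 0" using assms by auto
  then have "\<bar>Im (Ln z)\<bar> \<le> pi"
    using mpi_less_Im_Ln[of z] Im_Ln_le_pi[of z] by linarith
  then show ?thesis
    using cmod_eq_Im[OF Re_Ln_unit[OF assms]] by simp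
qed

lemma norm_exp_Ln_div_minus_one_le:
  assumes "cmod z = 1" "2 * pi \<le> real M"
  shows "cmod (exp (Ln z / of_nat M) - 1) \<le> 3/2 * pi / real M"
proof -
  have M: "real M > 0" using assms(2) pi_gt_zero by linarith
  have u: "cmod (Ln z / of_nat M) \<le> pi / real M"
    using norm_Ln_unit_le_pi[OF assms(1)] M by (simp add: norm_divide divide_right_mono)
  moreover have "pi / real M \<le> 1/2"
    using assms(2) M by (simp add: field_simps)
  ultimately have "cmod (Ln z / of_nat M) \<le> 1/2" by linarith
  then have "cmod (exp (Ln z / of_nat M) ^ 1 - 1) \<le> 3/2 * cmod (of_nat 1 * (Ln z / of_nat M))"
    by (intro norm_exp_power_minus_one_le) (simp del: of_nat_1)
  also have "\<dots> \<le> 3/2 * (pi / real M)"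
    using u by simp
  finally show ?thesis by simp
qed

text \<open>The powers \<open>w\<^sup>j\<close>, \<open>j \<le> M\<close>, of the root \<open>w = exp (Ln z / M)\<close> run along the short arc
  from \<open>1\<close> to \<open>z\<close>; those of \<open>b\<close> stay close to them.\<close>

lemma power_near_root_estimates:
  fixes b z :: complex and M :: nat
  defines "w \<equiv> exp (Ln z / of_nat M)"
  assumes "cmod b = 1" "cmod z = 1" "M > 0" "real M * cmod (b - w) < e"
  shows "cmod (b ^ M - z) < e"
    and "cmod (Ln z) \<le> 1/2 \<Longrightarrow> j \<le> M \<Longrightarrow> cmod (b ^ j - 1) < e + 3/2 * cmod (Ln z)"
proof -
  have wu: "cmod w = 1" unfolding w_def by (rule norm_exp_Ln_div[OF assms(3)])
  have bj: "cmod (b ^ j - w ^ j) < e" if "j \<le> M" for j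
  proof -
    have "cmod (b ^ j - w ^ j) \<le> real j * cmod (b - w)"
      by (rule norm_power_diff_le[OF assms(2) wu])
    also have "\<dots> \<le> real M * cmod (b - w)"
      using that by (simp add: mult_right_mono)
    finally show ?thesis using assms(5) by linarith
  qed
  have "z \<noteq> 0" using assms(3) by auto
  then have "w ^ M = z"
    using assms(4) by (simp add: w_def exp_of_nat_mult[symmetric])
  then show "cmod (b ^ M - z) < e" using bj[of M] by simp
  assume L: "cmod (Ln z) \<le> 1/2" and j: "j \<le> M"
  have jL: "cmod (of_nat j * (Ln z / of_nat M)) \<le> cmod (Ln z)"
    using j assms(4) by (simp add: norm_mult norm_divide field_simps mult_right_mono)
  have "cmod (w ^ j - 1) \<le> 3/2 * cmod (of_nat j * (Ln z / of_nat M))"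
    unfolding w_def using jL L by (intro norm_exp_power_minus_one_le) linarith
  also have "\<dots> \<le> 3/2 * cmod (Ln z)"
    using jL by simp
  finally have "cmod (w ^ j - 1) \<le> 3/2 * cmod (Ln z)" .
  moreover have "cmod (b ^ j - 1) \<le> cmod (b ^ j - w ^ j) + cmod (w ^ j - 1)"
    using norm_triangle_ineq[of "b ^ j - w ^ j" "w ^ j - 1"] by simp
  ultimately show "cmod (b ^ j - 1) < e + 3/2 * cmod (Ln z)"
    using bj[OF j] by linarith
qed

section \<open>The group \<open>\<T>\<^sup>\<nat>\<close> and its product topology\<close>

lemma TN_norm: "x \<in> TN \<Longrightarrow> cmod (x i) = 1"
  by (simp add: TN_def Tor_def)

lemma TN_nonzero: "x \<in> TN \<Longrightarrow> x i \<noteq> 0"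
  using TN_norm[of x i] by auto

lemma TN_I: "(\<And>i. cmod (x i) = 1) \<Longrightarrow> x \<in> TN"
  by (simp add: TN_def Tor_def)

lemma tmult_TN: "g \<in> TN \<Longrightarrow> h \<in> TN \<Longrightarrow> tmult g h \<in> TN"
  by (intro TN_I) (simp add: tmult_def norm_mult TN_norm)

lemma tinv_TN: "g \<in> TN \<Longrightarrow> tinv g \<in> TN"
  by (intro TN_I) (simp add: tinv_def norm_inverse TN_norm)

lemma tone_TN: "tone \<in> TN"
  by (intro TN_I) (simp add: tone_def)

lemma tmult_assoc: "tmult (tmult a b) c = tmult a (tmult b c)"
  by (simp add: tmult_def mult.assoc)

lemma tmult_commute: "tmult a b = tmult b a"
  by (simp add: tmult_def mult.commute)

lemma tmult_tone [simp]: "tmult tone g = g" "tmult g tone = g"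
  by (simp_all add: tmult_def tone_def)

lemma tinv_tone [simp]: "tinv tone = tone"
  by (simp add: tinv_def tone_def)

lemma tmult_tinv_left: "g \<in> TN \<Longrightarrow> tmult (tinv g) g = tone"
  by (rule ext) (simp add: tmult_def tinv_def tone_def TN_nonzero)

lemma tmult_tinv_right: "g \<in> TN \<Longrightarrow> tmult g (tinv g) = tone"
  by (metis tmult_commute tmult_tinv_left)

lemma tmult_tinv_cancel_left: "g \<in> TN \<Longrightarrow> tmult (tinv g) (tmult g h) = h"
  by (simp add: tmult_assoc[symmetric] tmult_tinv_left)

lemma tmult_tinv_cancel_right: "g \<in> TN \<Longrightarrow> tmult g (tmult (tinv g) h) = h"
  by (simp add: tmult_assoc[symmetric] tmult_tinv_right)

lemma topspace_TN_top [simp]: "topspace TN_top = TN"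
  by (simp add: TN_top_def)

definition cylinder :: "(nat \<Rightarrow> complex) \<Rightarrow> nat \<Rightarrow> real \<Rightarrow> (nat \<Rightarrow> complex) set" where
  "cylinder c n r = {y. \<forall>i\<le>n. cmod (y i - c i) < r}"

lemma centre_in_cylinder: "r > 0 \<Longrightarrow> c \<in> cylinder c n r"
  by (simp add: cylinder_def)

lemma open_cylinder: "open (cylinder c n r)"
proof -
  have "open {y::nat \<Rightarrow> complex. \<forall>i\<in>{..n}. y (id i) \<in> ball (c i) r}"
    by (rule product_topology_basis') auto
  moreover have "{y. \<forall>i\<in>{..n}. y (id i) \<in> ball (c i) r} = cylinder c n r"
    by (auto simp: cylinder_def dist_norm norm_minus_commute)
  ultimately show ?thesis by simp
qed

lemma openin_TN_cylinder: "openin TN_top (TN \<inter> cylinder c n r)"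
  unfolding TN_top_def by (rule openin_open_Int[OF open_cylinder])

lemma openin_TN_top_contains_cylinder:
  assumes "openin TN_top U" "x \<in> U"
  obtains n r where "r > 0" "TN \<inter> cylinder x n r \<subseteq> U"
proof -
  obtain S where S: "open S" "U = TN \<inter> S"
    using assms(1) unfolding TN_top_def by (auto simp: openin_open)
  have "openin (product_topology (\<lambda>i. euclidean) UNIV) S"
    using S(1) by (simp add: open_fun_def)
  then obtain X where X: "x \<in> (\<Pi>\<^sub>E i\<in>UNIV. X i)" "\<forall>i. openin euclidean (X i)"
      "finite {i. X i \<noteq> topspace euclidean}" "(\<Pi>\<^sub>E i\<in>UNIV. X i) \<subseteq> S"
    using product_topology_open_contains_basis[of "\<lambda>i. euclidean" UNIV S x] assms(2) S(2) by blast
  define J where "J = {i. X i \<noteq> UNIV}"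
  have J: "finite J" using X(3) by (simp add: J_def)
  have "\<forall>i\<in>J. \<exists>e>0. ball (x i) e \<subseteq> X i"
    using X(1,2) by (metis PiE_iff UNIV_I open_contains_ball open_openin)
  then obtain e where e: "\<And>i. i \<in> J \<Longrightarrow> e i > 0 \<and> ball (x i) (e i) \<subseteq> X i"
    by metis
  define r where "r = Min (insert 1 (e ` J))"
  define n where "n = Max (insert 0 J)"
  have r: "r > 0" unfolding r_def using J e by (subst Min_gr_iff) auto
  have "y \<in> U" if y: "y \<in> TN \<inter> cylinder x n r" for y
  proof -
    have "y i \<in> X i" for i
    proof (cases "i \<in> J")
      case True
      have "r \<le> e i" "i \<le> n"
        unfolding r_def n_def using J True by (auto intro: Min_le Max_ge)
      then have "cmod (y i - x i) < e i" using y by (force simp: cylinder_def)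
      then show ?thesis using e[OF True] by (auto simp: dist_norm norm_minus_commute)
    next
      case False
      then show ?thesis by (simp add: J_def)
    qed
    then show "y \<in> U" using S X(4) y by auto
  qed
  then show ?thesis using r that by blast
qed

lemma in_closure_of_TN_top_meets_cylinder:
  assumes "q \<in> TN_top closure_of S" "\<delta> > 0"
  obtains s where "s \<in> S" "s \<in> cylinder q m \<delta>"
proof -
  have "q \<in> TN \<inter> cylinder q m \<delta>"
    using assms closure_of_subset_topspace centre_in_cylinder by fastforce
  moreover have "\<forall>T. q \<in> T \<and> openin TN_top T \<longrightarrow> (\<exists>s. s \<in> S \<and> s \<in> T)"
    using assms(1) by (simp add: in_closure_of)
  ultimately show ?thesis
    using openin_TN_cylinder that by blast
qed

lemma tmult_tinv_in_cylinder:
  assumes "a \<in> cylinder tone n r" "b \<in> TN \<inter> cylinder tone n r"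
  shows "tmult a (tinv b) \<in> cylinder tone n (2 * r)"
proof -
  have "cmod (a i * inverse (b i) - 1) < 2 * r" if "i \<le> n" for i
  proof -
    have ab: "cmod (a i - 1) < r" "cmod (b i - 1) < r"
      using assms that by (auto simp: cylinder_def tone_def)
    have "cmod (a i * inverse (b i) - 1) = cmod ((a i - 1) - (b i - 1))"
      using assms(2) by (simp add: norm_mult_inverse_minus_one TN_norm)
    also have "\<dots> \<le> cmod (a i - 1) + cmod (b i - 1)"
      by (rule norm_triangle_ineq4)
    also have "\<dots> < 2 * r"
      using ab by linarith
    finally show ?thesis .
  qed
  then show ?thesis by (simp add: cylinder_def tmult_def tinv_def tone_def)
qed

lemma tmult_in_TN_cylinder:
  assumes "x \<in> TN" "c \<in> TN" "\<And>l. l \<le> n \<Longrightarrow> cmod (c l - d l) < \<epsilon>"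
  shows "tmult c x \<in> TN \<inter> cylinder (tmult d x) n \<epsilon>"
proof -
  have "cmod (c l * x l - d l * x l) < \<epsilon>" if "l \<le> n" for l
    using assms(3)[OF that] TN_norm[OF assms(1)]
    by (simp add: left_diff_distrib[symmetric] norm_mult)
  then show ?thesis
    using tmult_TN[OF assms(2,1)] by (simp add: cylinder_def tmult_def)
qed

lemma compact_TN: "compact TN"
proof -
  have "TN = (\<Pi>\<^sub>E i\<in>UNIV. Tor)" by (auto simp: TN_def)
  moreover have "compactin (product_topology (\<lambda>i. euclidean) UNIV) (\<Pi>\<^sub>E i\<in>(UNIV::nat set). Tor)"
    by (subst compactin_PiE) (auto simp: Tor_def compact_sphere[of 0 1, unfolded sphere_def, simplified])
  ultimately show ?thesis
    by (metis compactin_euclidean_iff euclidean_product_topology)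
qed

lemma TN_top_Baire:
  "completely_metrizable_space TN_top \<or> locally_compact_space TN_top \<and> regular_space TN_top"
proof -
  have "compact_space TN_top"
    unfolding TN_top_def using compact_TN by (simp add: compact_space_subtopology compactin_euclidean_iff)
  moreover have "Hausdorff_space TN_top"
    unfolding TN_top_def by (simp add: Hausdorff_space_subtopology)
  ultimately show ?thesis
    by (simp add: compact_imp_locally_compact_space compact_Hausdorff_imp_regular_space)
qed

lemma continuous_map_TN_top_coordinatewise:
  assumes "\<And>i. continuous_on TN (\<lambda>x. f x i)" "f ` TN \<subseteq> TN"
  shows "continuous_map TN_top TN_top f"
  using continuous_on_coordinatewise_then_product[of TN f] assms
  by (auto simp: TN_top_def)

lemma continuous_on_TN_coordinate: "continuous_on TN (\<lambda>x::nat \<Rightarrow> complex. x i)"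
  using continuous_on_subset[OF continuous_on_product_coordinates[of i]] by blast

lemma continuous_map_TN_top_tmult: "a \<in> TN \<Longrightarrow> continuous_map TN_top TN_top (tmult a)"
  by (intro continuous_map_TN_top_coordinatewise)
    (auto simp: tmult_def tmult_TN[unfolded tmult_def] intro!: continuous_intros continuous_on_TN_coordinate)

lemma continuous_map_TN_top_tinv: "continuous_map TN_top TN_top tinv"
  by (intro continuous_map_TN_top_coordinatewise)
    (auto simp: tinv_def tinv_TN[unfolded tinv_def] TN_nonzero intro!: continuous_intros continuous_on_TN_coordinate)

lemma walk_points_in_cylinder:
  assumes x: "x \<in> TN" and a: "a \<in> TN" "a \<in> cylinder tone n \<eta>" and b: "\<And>l. cmod (b l) = 1"
    and small: "\<And>l. l \<le> n \<Longrightarrow> cmod (b l ^ j - 1) < \<epsilon> - \<eta>"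
  shows "(\<lambda>l. b l ^ j * x l) \<in> TN \<inter> cylinder x n \<epsilon>"
    and "(\<lambda>l. b l ^ j * (inverse (a l) * x l)) \<in> TN \<inter> cylinder x n \<epsilon>"
proof -
  have "cmod (a 0 - 1) < \<eta>" using a(2) by (simp add: cylinder_def tone_def)
  then have "0 < \<eta>" using norm_ge_zero[of "a 0 - 1"] by linarith
  have bj: "(\<lambda>l. b l ^ j) \<in> TN"
    using b by (intro TN_I) (simp add: norm_power)
  have "cmod (b l ^ j - tone l) < \<epsilon>" if "l \<le> n" for l
    using small[OF that] \<open>0 < \<eta>\<close> by (simp add: tone_def)
  then have "tmult (\<lambda>l. b l ^ j) x \<in> TN \<inter> cylinder (tmult tone x) n \<epsilon>"
    by (rule tmult_in_TN_cylinder[OF x bj])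
  then have "tmult (\<lambda>l. b l ^ j) x \<in> TN \<inter> cylinder x n \<epsilon>"
    by simp
  then show "(\<lambda>l. b l ^ j * x l) \<in> TN \<inter> cylinder x n \<epsilon>"
    by (simp add: tmult_def)
  have "cmod (b l ^ j * inverse (a l) - tone l) < \<epsilon>" if "l \<le> n" for l
  proof -
    have "cmod (b l ^ j * inverse (a l) - 1) \<le> cmod (b l ^ j - 1) + cmod (a l - 1)"
      using norm_mult_inverse_minus_one_le[OF TN_norm[OF a(1)]] .
    moreover have "cmod (a l - 1) < \<eta>"
      using a(2) that by (simp add: cylinder_def tone_def)
    ultimately show ?thesis
      using small[OF that] unfolding tone_def by linarith
  qed
  moreover have "tmult (\<lambda>l. b l ^ j) (tinv a) \<in> TN"
    using bj tinv_TN[OF a(1)] by (rule tmult_TN)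
  ultimately have "tmult (tmult (\<lambda>l. b l ^ j) (tinv a)) x \<in> TN \<inter> cylinder (tmult tone x) n \<epsilon>"
    by (intro tmult_in_TN_cylinder[OF x]) (simp_all add: tmult_def tinv_def)
  then have "tmult (tmult (\<lambda>l. b l ^ j) (tinv a)) x \<in> TN \<inter> cylinder x n \<epsilon>"
    by simp
  then show "(\<lambda>l. b l ^ j * (inverse (a l) * x l)) \<in> TN \<inter> cylinder x n \<epsilon>"
    by (simp add: tmult_def tinv_def mult.assoc)
qed

lemma alternating_walk_in_local_orbit:
  fixes a1 a2 x :: "nat \<Rightarrow> complex"
  defines "b \<equiv> \<lambda>l. inverse (a1 l) * a2 l"
  assumes V: "tinv a1 \<in> V" "a2 \<in> V" and M: "M > 0"
    and U: "\<And>j. j \<le> M \<Longrightarrow> (\<lambda>l. b l ^ j * x l) \<in> U"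
      "\<And>j. j < M \<Longrightarrow> (\<lambda>l. b l ^ j * (inverse (a1 l) * x l)) \<in> U"
  shows "(\<lambda>l. b l ^ M * x l) \<in> local_orbit tmult x U V"
proof -
  define gs where "gs i = (if even i then tinv a1 else a2)" for i :: nat
  define xs where "xs i = (\<lambda>l. b l ^ (i div 2) * (if odd i then inverse (a1 l) * x l else x l))"
    for i
  define k where "k = 2 * M - 1"
  have kM: "Suc k = 2 * M" using M by (simp add: k_def)
  have step: "xs (Suc i) = tmult (gs i) (xs i)" for i
  proof (cases "even i")
    case True
    then show ?thesis
      by (intro ext) (simp add: xs_def gs_def tmult_def tinv_def even_Suc_div_two algebra_simps)
  next
    case False
    then show ?thesis
      by (intro ext) (simp add: xs_def gs_def tmult_def tinv_def b_def algebra_simps)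
  qed
  have "xs i \<in> U" if "i \<le> Suc k" for i
  proof (cases "odd i")
    case True
    then have "i div 2 < M" using that kM by presburger
    then show ?thesis using U(2) True by (simp add: xs_def)
  next
    case False
    then have "i div 2 \<le> M" using that kM by presburger
    then show ?thesis using U(1) False by (simp add: xs_def)
  qed
  moreover have "xs 0 = x" "xs (Suc k) = (\<lambda>l. b l ^ M * x l)"
    using kM by (simp_all add: xs_def)
  moreover have "gs i \<in> V" for i
    using V by (simp add: gs_def)
  ultimately have "\<exists>k gs xs. (\<forall>i\<le>k. gs i \<in> V) \<and> (\<forall>i\<le>Suc k. xs i \<in> U) \<and> xs 0 = x \<and>
      xs (Suc k) = (\<lambda>l. b l ^ M * x l) \<and> (\<forall>i\<le>k. xs (Suc i) = tmult (gs i) (xs i))"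
    using step by blast
  moreover have "(\<lambda>l. b l ^ M * x l) \<in> U"
    using U(1) by simp
  ultimately show ?thesis
    unfolding local_orbit_def by blast
qed

section \<open>Pettis' lemma\<close>

locale translation_group =
  fixes X :: "(nat \<Rightarrow> complex) topology"
  assumes topspace_subset_TN: "topspace X \<subseteq> TN"
    and tone_in_topspace: "tone \<in> topspace X"
    and tmult_closed: "g \<in> topspace X \<Longrightarrow> h \<in> topspace X \<Longrightarrow> tmult g h \<in> topspace X"
    and tinv_closed: "g \<in> topspace X \<Longrightarrow> tinv g \<in> topspace X"
    and continuous_map_tmult: "g \<in> topspace X \<Longrightarrow> continuous_map X X (tmult g)"
    and continuous_map_tinv: "continuous_map X X tinv"
    and Baire: "completely_metrizable_space X \<or> locally_compact_space X \<and> regular_space X"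

begin

lemma homeomorphic_map_tmult: "g \<in> topspace X \<Longrightarrow> homeomorphic_map X X (tmult g)"
  unfolding homeomorphic_map_maps homeomorphic_maps_def using topspace_subset_TN
  by (intro exI[of _ "tmult (tinv g)"])
    (auto simp: continuous_map_tmult tinv_closed tmult_tinv_cancel_left tmult_tinv_cancel_right)

lemma openin_tmult_image: "g \<in> topspace X \<Longrightarrow> openin X Q \<Longrightarrow> openin X (tmult g ` Q)"
  using homeomorphic_map_tmult homeomorphic_imp_open_map open_map_def by blast

lemma openin_translate_preimage:
  assumes "a \<in> topspace X" "openin X Q"
  shows "openin X {h \<in> topspace X. tmult (tinv h) a \<in> Q}"
proof -
  have "continuous_map X X (\<lambda>h. tmult a (tinv h))"
    using continuous_map_compose[OF continuous_map_tinv continuous_map_tmult[OF assms(1)]]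
    by (simp add: o_def)
  then show ?thesis
    using openin_continuous_map_preimage[OF _ assms(2)] by (simp add: tmult_commute)
qed

lemma pettis:
  assumes "baire_property X S" "\<not> meager_in X S"
  obtains W where "openin X W" "tone \<in> W" "\<And>h. h \<in> W \<Longrightarrow> \<exists>a\<in>S. \<exists>b\<in>S. h = tmult a (tinv b)"
proof -
  obtain Q where Q: "openin X Q" "meager_in X (sym_diff S Q)"
    using assms(1) unfolding baire_property_def by blast
  define M where "M = sym_diff S Q"
  have "Q \<noteq> {}"
    using Q(2) assms(2) meager_in_subset[of X M S] by (auto simp: M_def)
  then obtain a0 where a0: "a0 \<in> Q" by blast
  have a0X: "a0 \<in> topspace X" using a0 Q(1) openin_subset by blast
  define W where "W = {h \<in> topspace X. tmult (tinv h) a0 \<in> Q}"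
  have "\<exists>a\<in>S. \<exists>b\<in>S. h = tmult a (tinv b)" if h: "h \<in> W" for h
  proof -
    have hX: "h \<in> topspace X" and hTN: "h \<in> TN"
      using h topspace_subset_TN by (auto simp: W_def)
    have "a0 \<in> tmult h ` Q"
      using h hTN by (auto simp: W_def tmult_tinv_cancel_right intro!: image_eqI[of _ _ "tmult (tinv h) a0"])
    then have "\<not> meager_in X (Q \<inter> tmult h ` Q)"
      using not_meager_in_openin[OF Baire] Q(1) openin_tmult_image[OF hX Q(1)] a0 by blast
    moreover have "meager_in X (M \<union> tmult h ` M)"
      using Q(2) by (simp add: M_def meager_in_Un meager_in_homeomorphic_image[OF homeomorphic_map_tmult[OF hX]])
    ultimately have "\<not> Q \<inter> tmult h ` Q \<subseteq> M \<union> tmult h ` M"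
      using meager_in_subset by blast
    then obtain a where a: "a \<in> Q" "a \<in> tmult h ` Q" "a \<notin> M" "a \<notin> tmult h ` M"
      by blast
    then obtain b where b: "b \<in> Q" "a = tmult h b" by blast
    have "a \<in> S" "b \<in> S" using a b by (auto simp: M_def)
    moreover have "b \<in> TN"
      using b(1) Q(1) openin_subset topspace_subset_TN by blast
    then have "h = tmult a (tinv b)"
      by (simp add: b(2) tmult_assoc tmult_tinv_right)
    ultimately show ?thesis by blast
  qed
  moreover have "openin X W"
    unfolding W_def by (rule openin_translate_preimage[OF a0X Q(1)])
  moreover have "tone \<in> W"
    using tone_in_topspace a0 by (simp add: W_def)
  ultimately show ?thesis using that by blast
qed

lemma not_meager_in_if_countable_translates_cover:
  assumes "countable D" "D \<subseteq> topspace X" "topspace X \<subseteq> (\<Union>d\<in>D. tmult d ` S)"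
  shows "\<not> meager_in X S"
proof
  assume "meager_in X S"
  then have "meager_in X (\<Union>d\<in>D. tmult d ` S)"
    using assms(1,2) homeomorphic_map_tmult meager_in_homeomorphic_image
    by (intro meager_in_countable_UN) blast+
  moreover have "\<not> meager_in X (topspace X)"
    using not_meager_in_openin[OF Baire] tone_in_topspace by (metis empty_iff openin_topspace)
  ultimately show False
    using assms(3) meager_in_subset by blast
qed

lemma separable_translates_cover:
  assumes "separable_space X" "openin X A" "tone \<in> A"
  obtains D where "countable D" "D \<subseteq> topspace X" "topspace X \<subseteq> (\<Union>d\<in>D. tmult d ` A)"
proof -
  obtain D where D: "countable D" "D \<subseteq> topspace X" "X closure_of D = topspace X"
    using assms(1) unfolding separable_space_def by blast
  have "g \<in> (\<Union>d\<in>D. tmult d ` A)" if g: "g \<in> topspace X" for g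
  proof -
    let ?S = "{h \<in> topspace X. tmult (tinv h) g \<in> A}"
    have "g \<in> ?S"
      using g topspace_subset_TN assms(3) by (auto simp: tmult_tinv_left)
    then have "D \<inter> ?S \<noteq> {}"
      using D(3) openin_translate_preimage[OF g assms(2)] dense_intersects_open[of X D] by auto
    then obtain d where d: "d \<in> D" "tmult (tinv d) g \<in> A" by blast
    then have "g = tmult d (tmult (tinv d) g)"
      using D(2) topspace_subset_TN by (auto simp: tmult_tinv_cancel_right)
    then show ?thesis using d by blast
  qed
  then show ?thesis using that D(1,2) by blast
qed

end

interpretation TN_top: translation_group TN_top
  by unfold_locales
    (auto simp: tone_TN tmult_TN tinv_TN continuous_map_TN_top_tmult continuous_map_TN_top_tinv
      TN_top_Baire)

section \<open>Polishable subgroups\<close>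

locale polish_subgroup =
  fixes G :: "(nat \<Rightarrow> complex) set" and \<tau> :: "(nat \<Rightarrow> complex) topology"
  assumes subgroup: "subgroup_TN G" and polish_group: "polish_group_topology_for G \<tau>"

begin

lemma topspace_tau [simp]: "topspace \<tau> = G"
  using polish_group by (simp add: polish_group_topology_for_def)

lemma G_subset_TN: "G \<subseteq> TN" and tone_G: "tone \<in> G"
  and tmult_G: "g \<in> G \<Longrightarrow> h \<in> G \<Longrightarrow> tmult g h \<in> G"
  and tinv_G: "g \<in> G \<Longrightarrow> tinv g \<in> G"
  using subgroup by (auto simp: subgroup_TN_def)

lemma continuous_map_tau_tmult: "a \<in> G \<Longrightarrow> continuous_map \<tau> \<tau> (tmult a)"
proof -
  assume a: "a \<in> G"
  have "continuous_map \<tau> (prod_topology \<tau> \<tau>) (\<lambda>h. (a, h))"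
    using a by (simp add: continuous_map_paired)
  moreover have "continuous_map (prod_topology \<tau> \<tau>) \<tau> (\<lambda>(g, h). tmult g h)"
    using polish_group by (simp add: polish_group_topology_for_def)
  ultimately show ?thesis
    using continuous_map_compose by (fastforce simp: o_def)
qed

sublocale translation_group \<tau>
  using polish_group G_subset_TN tone_G tmult_G tinv_G continuous_map_tau_tmult
  by unfold_locales (auto simp: polish_group_topology_for_def polish_space_def)

lemma baire_property_tau_borel:
  assumes "B \<in> sets (borel :: (nat \<Rightarrow> complex) measure)" "B \<subseteq> G"
  shows "baire_property \<tau> B"
  using polish_group assms baire_property_sigma_sets[of B \<tau>]
  by (simp add: polish_group_topology_for_def borel_sets_of_def)

lemma G_borel: "G \<in> sets (borel :: (nat \<Rightarrow> complex) measure)"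
proof -
  have "G \<in> borel_sets_of \<tau>"
    unfolding borel_sets_of_def by (metis topspace_tau openin_topspace sigma_sets.Basic mem_Collect_eq)
  then show ?thesis
    using polish_group by (simp add: polish_group_topology_for_def)
qed

lemma countable_translates_cover_cylinder:
  assumes "r > 0"
  obtains K where "countable K" "K \<subseteq> G" "G \<subseteq> (\<Union>k\<in>K. tmult k ` (G \<inter> cylinder tone n r))"
proof -
  obtain F where F: "F \<subseteq> (\<lambda>k. cylinder k n r) ` G" "countable F"
      "\<Union>F = (\<Union>k\<in>G. cylinder k n r)"
    using Lindelof[of "(\<lambda>k. cylinder k n r) ` G"] open_cylinder by blast
  then have "\<forall>S\<in>F. \<exists>k. k \<in> G \<and> S = cylinder k n r"
    by blast
  then obtain ch where ch: "\<And>S. S \<in> F \<Longrightarrow> ch S \<in> G \<and> S = cylinder (ch S) n r"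
    by metis
  define K where "K = ch ` F"
  have K: "K \<subseteq> G" "countable K"
    using ch F(2) by (auto simp: K_def)
  have "g \<in> (\<Union>k\<in>K. tmult k ` (G \<inter> cylinder tone n r))" if g: "g \<in> G" for g
  proof -
    obtain S where S: "S \<in> F" "g \<in> S"
      using F(3) g centre_in_cylinder[OF assms] by blast
    define k where "k = ch S"
    have k: "k \<in> K" "g \<in> cylinder k n r"
      using ch[OF S(1)] S by (auto simp: K_def k_def)
    have kTN: "k \<in> TN" using k K(1) G_subset_TN by blast
    have "cmod (inverse (k i) * g i - 1) < r" if "i \<le> n" for i
      using k(2) that norm_mult_inverse_minus_one[OF TN_norm[OF kTN], of "g i" i]
      by (simp add: cylinder_def mult.commute)
    then have "tmult (tinv k) g \<in> cylinder tone n r"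
      by (simp add: cylinder_def tmult_def tinv_def tone_def)
    moreover have "tmult (tinv k) g \<in> G"
      using k(1) K(1) g by (blast intro: tmult_G tinv_G)
    ultimately have "tmult (tinv k) g \<in> G \<inter> cylinder tone n r" by blast
    moreover have "g = tmult k (tmult (tinv k) g)"
      using kTN by (simp add: tmult_tinv_cancel_right)
    ultimately show ?thesis using k(1) by blast
  qed
  then show ?thesis using that K by blast
qed

text \<open>Automatic continuity of the inclusion of \<open>(G, \<tau>)\<close> into \<open>TN\<close> at the identity.\<close>

lemma tau_neighbourhood_in_cylinder:
  assumes "r > 0"
  obtains W where "openin \<tau> W" "tone \<in> W" "W \<subseteq> cylinder tone n r"
proof -
  define B where "B = G \<inter> cylinder tone n (r/2)"
  obtain K where K: "countable K" "K \<subseteq> G" "G \<subseteq> (\<Union>k\<in>K. tmult k ` B)"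
    using countable_translates_cover_cylinder[of "r/2" n] assms unfolding B_def by auto
  have "baire_property \<tau> B"
    unfolding B_def
    by (intro baire_property_tau_borel sets.Int[OF G_borel] borel_open open_cylinder) auto
  moreover have "\<not> meager_in \<tau> B"
    using not_meager_in_if_countable_translates_cover K by simp
  ultimately obtain W where W: "openin \<tau> W" "tone \<in> W"
      "\<And>h. h \<in> W \<Longrightarrow> \<exists>a\<in>B. \<exists>b\<in>B. h = tmult a (tinv b)"
    using pettis by blast
  have "W \<subseteq> cylinder tone n r"
  proof
    fix h assume "h \<in> W"
    then obtain a b where "a \<in> B" "b \<in> B" "h = tmult a (tinv b)" using W(3) by blast
    then show "h \<in> cylinder tone n r"
      using tmult_tinv_in_cylinder[of a n "r/2" b] G_subset_TN by (auto simp: B_def)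
  qed
  then show ?thesis using that W(1,2) by blast
qed

end

section \<open>Strongly dense polishable subgroups\<close>

locale strongly_dense_polish_subgroup = polish_subgroup +
  assumes strongly_dense: "strongly_dense G"

begin

lemma exists_G_agreeing: "y \<in> TN \<Longrightarrow> \<exists>g\<in>G. \<forall>i\<le>n. g i = y i"
  using strongly_dense unfolding strongly_dense_def TN_def by blast

lemma dense_G: "TN_top closure_of G = TN"
proof -
  have "G \<inter> U \<noteq> {}" if U: "openin TN_top U" "y \<in> U" for U y
  proof -
    obtain n r where nr: "r > 0" "TN \<inter> cylinder y n r \<subseteq> U"
      using openin_TN_top_contains_cylinder[OF U] by blast
    have "y \<in> TN" using U openin_subset by fastforce
    then obtain g where g: "g \<in> G" "\<forall>i\<le>n. g i = y i" using exists_G_agreeing by blast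
    then have "g \<in> TN \<inter> cylinder y n r"
      using G_subset_TN nr(1) by (auto simp: cylinder_def)
    then show ?thesis using g(1) nr(2) by blast
  qed
  then show ?thesis
    using G_subset_TN dense_intersects_open[of TN_top G] by auto
qed

lemma orbit_eq: "orbit \<tau> tmult x = tmult x ` G"
  by (auto simp: orbit_def tmult_commute)

lemma orbit_dense:
  assumes "x \<in> TN"
  shows "TN_top closure_of (orbit \<tau> tmult x) = TN"
proof -
  have hom: "homeomorphic_map TN_top TN_top (tmult x)"
    using assms by (intro TN_top.homeomorphic_map_tmult) simp
  have "TN_top closure_of (tmult x ` G) = tmult x ` (TN_top closure_of G)"
    using homeomorphic_map_closure_of[OF hom] G_subset_TN by simp
  also have "\<dots> = TN"
    using dense_G homeomorphic_imp_surjective_map[OF hom] by simp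
  finally show ?thesis by (simp add: orbit_eq)
qed

lemma baire_property_TN_top_G: "baire_property TN_top G"
proof -
  have "TN \<in> sigma_sets UNIV {S. open S}"
    using borel_closed[OF compact_imp_closed[OF compact_TN]] by (simp add: sets_borel)
  moreover have "G \<in> sigma_sets UNIV {S. open S}"
    using G_borel by (simp add: sets_borel)
  then have "TN \<inter> G \<in> (\<inter>) TN ` sigma_sets UNIV {S. open S}"
    by blast
  ultimately have "G \<in> sigma_sets TN ((\<inter>) TN ` {S. open S})"
    using sigma_sets_Int[of TN UNIV] G_subset_TN by (simp add: Int_absorb1)
  moreover have "{U. openin TN_top U} = (\<inter>) TN ` {S. open S}"
    unfolding TN_top_def by (auto simp: openin_open)
  ultimately show ?thesis
    using baire_property_sigma_sets[of G TN_top] by simp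
qed

text \<open>A non-meager subgroup with the Baire property contains a neighbourhood of the identity,
  hence is open; being dense, it is everything.\<close>

lemma meager_in_G:
  assumes "G \<noteq> TN"
  shows "meager_in TN_top G"
proof (rule ccontr)
  assume "\<not> meager_in TN_top G"
  then obtain W where W: "openin TN_top W" "tone \<in> W"
      "\<And>h. h \<in> W \<Longrightarrow> \<exists>a\<in>G. \<exists>b\<in>G. h = tmult a (tinv b)"
    using TN_top.pettis baire_property_TN_top_G by blast
  have WG: "W \<subseteq> G"
  proof
    fix h assume "h \<in> W"
    then obtain a b where "a \<in> G" "b \<in> G" "h = tmult a (tinv b)" using W(3) by blast
    then show "h \<in> G" by (simp add: tmult_G tinv_G)
  qed
  have "h \<in> G" if h: "h \<in> TN" for h
  proof -
    have "openin TN_top (tmult h ` W)"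
      using h W(1) by (intro TN_top.openin_tmult_image) simp_all
    moreover have "h \<in> tmult h ` W" using W(2) by force
    ultimately have "G \<inter> tmult h ` W \<noteq> {}"
      using dense_G dense_intersects_open[of TN_top G] by auto
    then obtain g where g: "g \<in> G" "g \<in> tmult h ` W" by blast
    then obtain w where w: "w \<in> W" "g = tmult h w" by blast
    have "w \<in> TN" using w(1) WG G_subset_TN by blast
    then have "h = tmult g (tinv w)"
      by (simp add: w(2) tmult_assoc tmult_tinv_right)
    then show ?thesis using g(1) w(1) WG tmult_G tinv_G by blast
  qed
  then show False using assms G_subset_TN by blast
qed

lemma orbit_meager: "G \<noteq> TN \<Longrightarrow> x \<in> TN \<Longrightarrow> meager_in TN_top (orbit \<tau> tmult x)"
  using meager_in_homeomorphic_image[OF TN_top.homeomorphic_map_tmult meager_in_G]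
  by (simp add: orbit_eq)

text \<open>By strong density the restrictions to the first \<open>m\<close> coordinates of countably many
  translates of \<open>A\<close> cover \<open>TN\<close>, so by Baire one of them is dense in a cylinder.\<close>

lemma restricted_translate_dense_in_cylinder:
  assumes A: "A \<subseteq> G" and D: "countable D" "D \<subseteq> G" "G \<subseteq> (\<Union>d\<in>D. tmult d ` A)"
  obtains d p n r where "d \<in> D" "p \<in> TN" "r > 0"
    "\<And>q \<delta>. q \<in> TN \<inter> cylinder p n r \<Longrightarrow> \<delta> > 0 \<Longrightarrow> \<exists>a\<in>A. \<forall>i\<le>m. cmod (d i * a i - q i) < \<delta>"
proof -
  define P where "P d = {y \<in> TN. \<exists>a\<in>A. \<forall>i\<le>m. y i = d i * a i}" for d
  have cover: "TN \<subseteq> (\<Union>d\<in>D. P d)"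
  proof
    fix y assume y: "y \<in> TN"
    obtain g where g: "g \<in> G" "\<forall>i\<le>m. g i = y i" using exists_G_agreeing[OF y] by blast
    then obtain d a where da: "d \<in> D" "a \<in> A" "g = tmult d a" using D(3) by blast
    then have "\<forall>i\<le>m. y i = d i * a i" using g by (simp add: tmult_def)
    then show "y \<in> (\<Union>d\<in>D. P d)" using da(1,2) y by (auto simp: P_def)
  qed
  obtain d where d: "d \<in> D" "TN_top interior_of (TN_top closure_of P d) \<noteq> {}"
    by (rule countable_cover_somewhere_dense[OF TN_top_Baire D(1), of P])
      (use cover tone_TN in \<open>auto simp: P_def\<close>)
  then obtain p where p: "p \<in> TN_top interior_of (TN_top closure_of P d)" by blast
  obtain n r where r: "r > 0" "TN \<inter> cylinder p n r \<subseteq> TN_top interior_of (TN_top closure_of P d)"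
    using openin_TN_top_contains_cylinder[OF openin_interior_of p] by blast
  have "\<exists>a\<in>A. \<forall>i\<le>m. cmod (d i * a i - q i) < \<delta>"
    if q: "q \<in> TN \<inter> cylinder p n r" and \<delta>: "\<delta> > 0" for q \<delta>
  proof -
    have "q \<in> TN_top closure_of P d"
      using q r(2) interior_of_subset[of TN_top "TN_top closure_of P d"] by blast
    then obtain s where "s \<in> P d" "s \<in> cylinder q m \<delta>"
      using in_closure_of_TN_top_meets_cylinder \<delta> by blast
    then obtain a where "a \<in> A" "\<forall>i\<le>m. s i = d i * a i" "\<forall>i\<le>m. cmod (s i - q i) < \<delta>"
      by (auto simp: P_def cylinder_def)
    then show ?thesis by auto
  qed
  moreover have "p \<in> TN" using subsetD[OF interior_of_subset_topspace p] by simp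
  ultimately show ?thesis using that d(1) r(1) by blast
qed

text \<open>Compare approximations \<open>d a\<^sub>1 \<approx> p\<close> and \<open>d a\<^sub>2 \<approx> p c\<close> on the first \<open>m\<close> coordinates.\<close>

lemma quotients_approximate_near_one:
  assumes A: "A \<subseteq> G" and D: "countable D" "D \<subseteq> G" "G \<subseteq> (\<Union>d\<in>D. tmult d ` A)"
  obtains r where "r > 0"
    "\<And>c \<delta>. c \<in> TN \<inter> cylinder tone m r \<Longrightarrow> \<delta> > 0 \<Longrightarrow>
       \<exists>a1\<in>A. \<exists>a2\<in>A. tmult (tinv a1) a2 \<in> cylinder c m \<delta>"
proof -
  obtain d p n r where d: "d \<in> D" "p \<in> TN" "r > 0"
    and near: "\<And>q \<delta>. q \<in> TN \<inter> cylinder p n r \<Longrightarrow> \<delta> > 0 \<Longrightarrow>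
      \<exists>a\<in>A. \<forall>i\<le>m. cmod (d i * a i - q i) < \<delta>"
    by (rule restricted_translate_dense_in_cylinder[OF A D, where m = m]) blast
  have "\<exists>a1\<in>A. \<exists>a2\<in>A. tmult (tinv a1) a2 \<in> cylinder c m \<delta>"
    if c: "c \<in> TN \<inter> cylinder tone m r" and \<delta>: "\<delta> > 0" for c \<delta>
  proof -
    define pc where "pc i = (if i \<le> m then p i * c i else p i)" for i
    have "cmod (pc i - p i) < r" for i
    proof (cases "i \<le> m")
      case True
      then have "pc i - p i = p i * (c i - 1)" by (simp add: pc_def algebra_simps)
      then show ?thesis using True c d(2) by (simp add: norm_mult TN_norm cylinder_def tone_def)
    qed (use d(3) in \<open>simp add: pc_def\<close>)
    moreover have "pc \<in> TN"
      using d(2) c by (intro TN_I) (auto simp: pc_def norm_mult TN_norm)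
    ultimately obtain a2 where a2: "a2 \<in> A" "\<forall>i\<le>m. cmod (d i * a2 i - pc i) < \<delta>/2"
      using near[of pc "\<delta>/2"] \<delta> by (auto simp: cylinder_def)
    have "p \<in> TN \<inter> cylinder p n r" using d(2,3) centre_in_cylinder by blast
    then obtain a1 where a1: "a1 \<in> A" "\<forall>i\<le>m. cmod (d i * a1 i - p i) < \<delta>/2"
      using near[of p "\<delta>/2"] \<delta> by auto
    have "cmod (inverse (a1 i) * a2 i - c i) < 2 * (\<delta>/2)" if "i \<le> m" for i
      using a1 a2 that d(1) D(2) A c G_subset_TN
      by (intro norm_inverse_mult_diff_less[where d = "d i" and p = "p i"])
        (auto simp: TN_norm pc_def)
    then have "tmult (tinv a1) a2 \<in> cylinder c m \<delta>"
      by (simp add: cylinder_def tmult_def tinv_def)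
    then show ?thesis using a1(1) a2(1) by blast
  qed
  then show ?thesis using that d(3) by blast
qed

lemma quotient_approximates_root:
  assumes A: "A \<subseteq> G" and D: "countable D" "D \<subseteq> G" "G \<subseteq> (\<Union>d\<in>D. tmult d ` A)"
    and z: "z \<in> TN" and e: "e > 0"
  obtains M a1 a2 where "M > 0" "a1 \<in> A" "a2 \<in> A"
    "\<And>l. l \<le> m \<Longrightarrow> real M * cmod (inverse (a1 l) * a2 l - exp (Ln (z l) / of_nat M)) < e"
proof -
  obtain r where r: "r > 0"
    "\<And>c \<delta>. c \<in> TN \<inter> cylinder tone m r \<Longrightarrow> \<delta> > 0 \<Longrightarrow>
       \<exists>a1\<in>A. \<exists>a2\<in>A. tmult (tinv a1) a2 \<in> cylinder c m \<delta>"
    using quotients_approximate_near_one[OF A D] by blast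
  obtain M :: nat where M: "real M > 3 * pi / r + 8" using reals_Archimedean2 by blast
  have "3 * pi / r > 0" using r(1) by simp
  then have M8: "2 * pi \<le> real M" "M > 0" using M pi_less_4 by linarith+
  have "real M * r > 3 * pi" using M r(1) \<open>3 * pi / r > 0\<close> by (simp add: field_simps)
  then have "3 * pi < 2 * (real M * r)" using pi_gt_zero by linarith
  then have piMr: "3/2 * pi / real M < r" using M8(2) by (simp add: field_simps)
  define w where "w l = exp (Ln (z l) / of_nat M)" for l
  have "w \<in> TN"
    unfolding w_def by (intro TN_I norm_exp_Ln_div TN_norm[OF z])
  moreover have "cmod (w l - 1) < r" for l
    using norm_exp_Ln_div_minus_one_le[OF TN_norm[OF z] M8(1), of l] piMr by (simp add: w_def)
  ultimately have "w \<in> TN \<inter> cylinder tone m r"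
    by (simp add: cylinder_def tone_def)
  moreover have "e / real M > 0" using e M8(2) by simp
  ultimately obtain a1 a2 where a: "a1 \<in> A" "a2 \<in> A" "tmult (tinv a1) a2 \<in> cylinder w m (e / real M)"
    using r(2) by blast
  have "real M * cmod (inverse (a1 l) * a2 l - w l) < e" if "l \<le> m" for l
    using a(3) that M8(2) by (simp add: cylinder_def tmult_def tinv_def field_simps)
  then show ?thesis using that[OF M8(2) a(1,2)] by (simp add: w_def)
qed

lemma in_closure_local_orbit:
  assumes A: "A \<subseteq> G" "A \<subseteq> V" "\<And>a. a \<in> A \<Longrightarrow> tinv a \<in> V" "A \<subseteq> cylinder tone n \<eta>"
    and D: "countable D" "D \<subseteq> G" "G \<subseteq> (\<Union>d\<in>D. tmult d ` A)"
    and U: "TN \<inter> cylinder x n \<epsilon> \<subseteq> U" and x: "x \<in> TN"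
    and \<eta>: "0 < \<eta>" "8 * \<eta> \<le> \<epsilon>" "\<eta> \<le> 1/2"
    and y: "y \<in> TN" "\<And>l. l \<le> n \<Longrightarrow> cmod (Ln (y l * inverse (x l))) < \<eta>"
  shows "y \<in> TN_top closure_of local_orbit tmult x U V"
proof -
  have "\<exists>q. q \<in> local_orbit tmult x U V \<and> q \<in> N" if N: "y \<in> N \<and> openin TN_top N" for N
  proof -
    obtain m0 \<delta>0 where \<delta>0: "\<delta>0 > 0" "TN \<inter> cylinder y m0 \<delta>0 \<subseteq> N"
      using openin_TN_top_contains_cylinder[of N y] N by blast
    define z where "z = tmult y (tinv x)"
    have z: "z \<in> TN" "tmult z x = y"
      using x y(1) by (simp_all add: z_def tmult_TN tinv_TN tmult_assoc tmult_tinv_left)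
    define e where "e = min \<delta>0 (\<epsilon>/4)"
    have e: "e > 0" "e \<le> \<delta>0" "e \<le> \<epsilon>/4"
      using \<delta>0(1) \<eta> by (auto simp: e_def)
    obtain M a1 a2 where M: "M > 0" "a1 \<in> A" "a2 \<in> A" and approx:
      "\<And>l. l \<le> max m0 n \<Longrightarrow> real M * cmod (inverse (a1 l) * a2 l - exp (Ln (z l) / of_nat M)) < e"
      using quotient_approximates_root[OF A(1) D z(1) e(1)] by blast
    define b where "b l = inverse (a1 l) * a2 l" for l
    have a1: "a1 \<in> TN" "a1 \<in> cylinder tone n \<eta>" using M(2) A G_subset_TN by auto
    have bu: "cmod (b l) = 1" for l
      using M(3) A(1) G_subset_TN a1(1) by (auto simp: b_def norm_mult norm_inverse TN_norm)
    note root = power_near_root_estimates[OF bu TN_norm[OF z(1)] M(1) approx[unfolded b_def[symmetric]]]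
    have small: "cmod (b l ^ j - 1) < \<epsilon> - \<eta>" if "l \<le> n" "j \<le> M" for l j
    proof -
      have L: "cmod (Ln (z l)) < \<eta>"
        using y(2)[OF that(1)] by (simp add: z_def tmult_def tinv_def)
      have "cmod (b l ^ j - 1) < e + 3/2 * cmod (Ln (z l))"
        using L \<eta>(3) that by (intro root(2)) auto
      moreover have "3/2 * cmod (Ln (z l)) < 3/2 * \<eta>" using L by simp
      ultimately show ?thesis using \<eta>(1,2) e(3) by linarith
    qed
    have "(\<lambda>l. b l ^ j * x l) \<in> TN \<inter> cylinder x n \<epsilon>" if "j \<le> M" for j
      using small that by (intro walk_points_in_cylinder(1)[OF x a1 bu]) auto
    moreover have "(\<lambda>l. b l ^ j * (inverse (a1 l) * x l)) \<in> TN \<inter> cylinder x n \<epsilon>" if "j < M" for j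
      using small that by (intro walk_points_in_cylinder(2)[OF x a1 bu]) auto
    ultimately have walk: "(\<lambda>l. b l ^ M * x l) \<in> local_orbit tmult x U V"
      unfolding b_def using M A(2,3) U by (intro alternating_walk_in_local_orbit) auto
    have "cmod (b l ^ M - z l) < \<delta>0" if "l \<le> m0" for l
      using root(1)[of l] e(2) that by (meson le_max_iff_disj less_le_trans)
    moreover have "(\<lambda>l. b l ^ M) \<in> TN"
      using bu by (intro TN_I) (simp add: norm_power)
    ultimately have "tmult (\<lambda>l. b l ^ M) x \<in> TN \<inter> cylinder (tmult z x) m0 \<delta>0"
      by (intro tmult_in_TN_cylinder[OF x])
    then have "(\<lambda>l. b l ^ M * x l) \<in> N"
      using \<delta>0(2) z(2) by (auto simp: tmult_def)
    with walk show ?thesis by blast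
  qed
  then show ?thesis using y(1) by (simp add: in_closure_of)
qed

lemma local_orbit_closure_has_interior:
  assumes U: "openin TN_top U" "x \<in> U"
    and V: "openin \<tau> V" "tone \<in> V" "\<forall>g\<in>V. tinv g \<in> V"
  shows "TN_top interior_of (TN_top closure_of local_orbit tmult x U V) \<noteq> {}"
proof -
  have x: "x \<in> TN" using U openin_subset by fastforce
  obtain n \<epsilon> where \<epsilon>: "\<epsilon> > 0" "TN \<inter> cylinder x n \<epsilon> \<subseteq> U"
    using openin_TN_top_contains_cylinder[OF U] by blast
  define \<eta> where "\<eta> = min (\<epsilon>/8) (1/2)"
  have \<eta>: "\<eta> > 0" "8 * \<eta> \<le> \<epsilon>" "\<eta> \<le> 1/2" using \<epsilon>(1) by (auto simp: \<eta>_def)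
  obtain W where W: "openin \<tau> W" "tone \<in> W" "W \<subseteq> cylinder tone n \<eta>"
    using tau_neighbourhood_in_cylinder[OF \<eta>(1)] by blast
  have VG: "V \<subseteq> G" using V(1) openin_subset by force
  have sep: "separable_space \<tau>"
    using polish_group by (simp add: polish_group_topology_for_def polish_space_def)
  obtain D where D: "countable D" "D \<subseteq> G" "G \<subseteq> (\<Union>d\<in>D. tmult d ` (V \<inter> W))"
    by (rule separable_translates_cover[OF sep, of "V \<inter> W"]) (use V W in auto)
  have "continuous (at 1) Ln"
    by (rule continuous_at_Ln) (simp add: nonpos_Reals_def)
  then obtain \<rho> where \<rho>: "\<rho> > 0" "\<And>z. cmod (z - 1) < \<rho> \<Longrightarrow> cmod (Ln z) < \<eta>"
    using \<eta>(1) unfolding continuous_at_eps_delta by (auto simp: dist_norm)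
  have "TN \<inter> cylinder x n \<rho> \<subseteq> TN_top closure_of local_orbit tmult x U V"
  proof
    fix y assume y: "y \<in> TN \<inter> cylinder x n \<rho>"
    have "cmod (Ln (y l * inverse (x l))) < \<eta>" if "l \<le> n" for l
      using y that \<rho>(2) norm_mult_inverse_minus_one[OF TN_norm[OF x]] by (auto simp: cylinder_def)
    then show "y \<in> TN_top closure_of local_orbit tmult x U V"
      using V W VG D \<epsilon>(2) x \<eta> y
      by (intro in_closure_local_orbit[of "V \<inter> W" V n \<eta>]) auto
  qed
  then have "TN \<inter> cylinder x n \<rho> \<subseteq> TN_top interior_of (TN_top closure_of local_orbit tmult x U V)"
    using openin_TN_cylinder by (simp add: interior_of_maximal)
  then show ?thesis
    using x \<rho>(1) centre_in_cylinder by blast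
qed

end

theorem mainTheorem1:
  fixes G :: "(nat \<Rightarrow> complex) set" and \<tau> :: "(nat \<Rightarrow> complex) topology"
  assumes "polishable G"
    and "G \<noteq> TN"
    and "strongly_dense G"
    and "polish_group_topology_for G \<tau>"
  shows "turbulent \<tau> tone tinv TN_top tmult"
proof -
  interpret strongly_dense_polish_subgroup G \<tau>
    using assms by unfold_locales (simp_all add: polishable_def)
  show ?thesis
    unfolding turbulent_def
    using orbit_dense orbit_meager[OF assms(2)] local_orbit_closure_has_interior by auto
qed

end
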